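(* Let $z\in\mathbb{R}^n$, $\lambda_1,\lambda_2>0$, $l\le0\le u$ in $\mathbb{R}^n$, and $\omega_i(\alpha)=\lambda_2|\alpha|_0+\delta_{[l_i,u_i]}(\alpha)$. Define functions $P_s^*:\mathbb{R}\to(-\infty,+\infty]$ recursively by $P_1^*(\alpha)=\frac12(z_1-\alpha)^2+\omega_1(\alpha)$ and, for $s\in[2\!:\!n]$, $$P_s^*(\alpha)=\min\Big\{P_{s-1}^*(\alpha),\ \min_{\alpha'\in\mathbb{R}}P_{s-1}^*(\alpha')+\lambda_1\Big\}+\tfrac12(\alpha-z_s)^2+\omega_s(\alpha).$$ Then for each $s\in[2\!:\!n]$, $P_s^*$ (a piecewise linear-quadratic function) has at most $O(s^{1+o(1)})$ linear-quadratic pieces.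
   Context: $|t|_0=0$ if $t=0$ and $1$ otherwise; $\delta_{[a,b]}$ is the indicator of the interval $[a,b]$. $P_s^*$ is the function computed in the $s$-th iteration of the dynamic-programming algorithm for computing a point in the proximal mapping of $x\mapsto\lambda_1\sum_{j=1}^{n-1}|x_j-x_{j+1}|_0+\lambda_2\|x\|_0+\delta_{\{l\le x\le u\}}(x)$. *)

theory Defs
  imports "HOL-Analysis.Analysis"
begin

text \<open>Vectors in R^n are represented as functions nat => real, indexed 1..n.\<close>

definition l0norm :: "real \<Rightarrow> real" where
  "l0norm t = (if t = 0 then 0 else 1)"

definition omega :: "real \<Rightarrow> (nat \<Rightarrow> real) \<Rightarrow> (nat \<Rightarrow> real) \<Rightarrow> nat \<Rightarrow> real \<Rightarrow> ereal" where
  "omega lam2 l u i a = (if l i \<le> a \<and> a \<le> u i then ereal (lam2 * l0norm a) else \<infinity>)"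

text \<open>The dynamic programming functions P_s^*; index 0 is unused.\<close>
fun Pstar :: "real \<Rightarrow> real \<Rightarrow> (nat \<Rightarrow> real) \<Rightarrow> (nat \<Rightarrow> real) \<Rightarrow> (nat \<Rightarrow> real) \<Rightarrow> nat \<Rightarrow> real \<Rightarrow> ereal" where
  "Pstar lam1 lam2 z l u 0 a = \<infinity>"
| "Pstar lam1 lam2 z l u (Suc 0) a = ereal ((z 1 - a)^2 / 2) + omega lam2 l u 1 a"
| "Pstar lam1 lam2 z l u (Suc (Suc k)) a =
     min (Pstar lam1 lam2 z l u (Suc k) a)
         ((INF b. Pstar lam1 lam2 z l u (Suc k) b) + ereal lam1)
     + ereal ((a - z (Suc (Suc k)))^2 / 2) + omega lam2 l u (Suc (Suc k)) a"

definition lq_pieces :: "(real \<Rightarrow> ereal) \<Rightarrow> nat \<Rightarrow> bool" where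
  "lq_pieces f k \<longleftrightarrow>
     (\<exists>I :: nat \<Rightarrow> real set. \<exists>qa qb qc :: nat \<Rightarrow> real.
        (\<forall>i<k. is_interval (I i)) \<and>
        {x. f x \<noteq> \<infinity>} = (\<Union>i<k. I i) \<and>
        (\<forall>i<k. \<forall>x\<in>I i. f x = ereal (qa i * x^2 + qb i * x + qc i)))"

end

theory Submission
  imports Defs
begin

(*
  Unrolling the recursion, P_s(a) is the minimum over the position k < s of the last jump of
  c_k + sum_{j = k+1..s} ((a - z_j)^2 / 2 + omega_j(a)), where c_0 = 0 and c_k = min P_k + lam1.
  On each of the sign regions a < 0, a = 0, a > 0 the term |a|_0 is constant, so the k-th
  candidate is a quadratic q_k with leading coefficient (s - k) / 2 on the interval D_k, the
  intersection of the boxes [l_j, u_j] with j > k, and is infinite outside D_k.  The D_k grow with k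
  and q_k - q_k' is convex for k < k', so every set {q_k < q_k'} is an interval.  Adding the
  candidates one at a time, the region where the new one is strictly best is an interval, which
  splits at most one existing piece in two: each step adds at most two pieces.  Hence P_s has at
  most 2s - 1 pieces on each sign region and at most 6s pieces in all.
*)

lemma is_interval_quadratic_less:
  fixes A B C A' B' C' :: real
  assumes "A' \<le> A"
  shows "is_interval {x. A * x^2 + B * x + C < A' * x^2 + B' * x + C'}"
proof -
  define f where "f x = (A - A') * x^2 + (B - B') * x + (C - C')" for x
  have "f x < 0" if a: "f a < 0" and b: "f b < 0" and x: "a \<le> x" "x \<le> b" for a b x
  proof -
    consider "x = a" | "x = b" | "a < x" "x < b" using x by linarith
    then show ?thesis
    proof cases
      case 3
      have chord: "(b - a) * f x = (b - x) * f a + (x - a) * f b - (A - A') * (b - a) * (x - a) * (b - x)"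
        by (simp add: f_def algebra_simps power2_eq_square)
      have "(b - x) * f a < 0" "(x - a) * f b < 0" using 3 a b by (simp_all add: mult_pos_neg)
      moreover have "0 \<le> (A - A') * (b - a) * (x - a) * (b - x)" using assms 3 by simp
      ultimately have "(b - a) * f x < 0" using chord by linarith
      then show ?thesis using 3 by (simp add: mult_less_0_iff)
    qed (use a b in auto)
  qed
  moreover have "{x. A * x^2 + B * x + C < A' * x^2 + B' * x + C'} = {x. f x < 0}"
    by (auto simp: f_def algebra_simps)
  ultimately show ?thesis unfolding is_interval_1 by blast
qed

definition interval_partition :: "real set \<Rightarrow> real set set \<Rightarrow> bool" where
  "interval_partition S \<I> \<longleftrightarrow> partition_on S \<I> \<and> finite \<I> \<and> (\<forall>I\<in>\<I>. is_interval I)"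

lemma interval_partition_Un:
  assumes "interval_partition S \<I>" "interval_partition T \<J>" "S \<inter> T = {}"
  shows "interval_partition (S \<union> T) (\<I> \<union> \<J>)"
  using assms disjoint_union[of \<I> \<J>]
  unfolding interval_partition_def partition_on_def by auto

definition left_of :: "real set \<Rightarrow> real set" where
  "left_of J = {x. \<forall>y\<in>J. x < y}"

definition right_of :: "real set \<Rightarrow> real set" where
  "right_of J = {x. \<forall>y\<in>J. y < x}"

lemma is_interval_left_of: "is_interval (left_of J)"
  unfolding left_of_def is_interval_1 by (blast intro: le_less_trans)

lemma is_interval_right_of: "is_interval (right_of J)"
  unfolding right_of_def is_interval_1 by (blast intro: less_le_trans)

lemma left_of_right_of_disjoint:
  "left_of J \<inter> J = {}" "right_of J \<inter> J = {}" "J \<noteq> {} \<Longrightarrow> left_of J \<inter> right_of J = {}"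
  unfolding left_of_def right_of_def by (fastforce dest: less_asym)+

lemma not_in_interval_left_of_or_right_of:
  assumes "is_interval J" "x \<notin> J"
  shows "x \<in> left_of J \<union> right_of J"
proof (rule ccontr)
  assume "x \<notin> left_of J \<union> right_of J"
  then obtain y1 y2 where "y1 \<in> J" "y2 \<in> J" "y1 \<le> x" "x \<le> y2"
    unfolding left_of_def right_of_def by (auto simp: not_less)
  then show False
    using assms unfolding is_interval_1 by blast
qed

lemma interval_meeting_left_of_and_right_of:
  assumes "is_interval I" "I \<inter> left_of J \<noteq> {}" "I \<inter> right_of J \<noteq> {}"
  shows "J \<subseteq> I"
proof
  fix y assume "y \<in> J"
  obtain p q where "p \<in> I" "q \<in> I" "p < y" "y < q"
    using assms(2,3) \<open>y \<in> J\<close> unfolding left_of_def right_of_def by blast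
  then show "y \<in> I"
    using assms(1) unfolding is_interval_1 by (meson less_imp_le)
qed

lemma card_image_Un_image_le:
  assumes "finite C" "A \<subseteq> C" "B \<subseteq> C" "card (A \<inter> B) \<le> 1"
  shows "card (f ` A \<union> g ` B) \<le> card C + 1"
proof -
  have fin: "finite A" "finite B"
    using assms(1-3) finite_subset by auto
  have "card (f ` A \<union> g ` B) \<le> card A + card B"
    using card_Un_le[of "f ` A" "g ` B"] card_image_le[OF fin(1), of f] card_image_le[OF fin(2), of g]
    by linarith
  also have "\<dots> = card (A \<union> B) + card (A \<inter> B)"
    using fin by (rule card_Un_Int)
  also have "\<dots> \<le> card C + 1"
    using card_mono[OF assms(1), of "A \<union> B"] assms(2-4) by simp
  finally show ?thesis .
qed

lemma interval_partition_refine: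
  assumes part: "interval_partition S \<I>" and J: "is_interval J" "J \<subseteq> S"
  obtains \<I>' where "interval_partition S \<I>'" "card \<I>' \<le> card \<I> + 2"
    "\<And>I'. I' \<in> \<I>' \<Longrightarrow> I' = J \<or> (\<exists>I\<in>\<I>. I' \<subseteq> I \<and> disjnt I' J)"
proof (cases "J = {}")
  case True
  then show ?thesis using that[of \<I>] part by auto
next
  case False
  define L where "L = left_of J"
  define R where "R = right_of J"
  define A where "A = {I\<in>\<I>. I \<inter> L \<noteq> {}}"
  define B where "B = {I\<in>\<I>. I \<inter> R \<noteq> {}}"
  define \<I>' where "\<I>' = insert J ((\<inter>) L ` A \<union> (\<inter>) R ` B)"
  have part_on: "partition_on S \<I>" and fin: "finite \<I>" and int: "\<forall>I\<in>\<I>. is_interval I"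
    using part by (auto simp: interval_partition_def)
  have LR: "L \<inter> J = {}" "R \<inter> J = {}" "L \<inter> R = {}"
    using left_of_right_of_disjoint False by (simp_all add: L_def R_def)
  have "S - J = L \<inter> S \<union> R \<inter> S"
    using not_in_interval_left_of_or_right_of[OF J(1)] LR unfolding L_def R_def by blast
  moreover have "(\<inter>) L ` A = (\<inter>) L ` \<I> - {{}}" "(\<inter>) R ` B = (\<inter>) R ` \<I> - {{}}"
    unfolding A_def B_def by auto
  ultimately have "partition_on (S - J) ((\<inter>) L ` A \<union> (\<inter>) R ` B)"
    using partition_on_restrict[OF part_on, of L] partition_on_restrict[OF part_on, of R] LR(3)
    unfolding partition_on_def by (auto intro!: disjoint_union)
  moreover have "disjnt J (\<Union>((\<inter>) L ` A \<union> (\<inter>) R ` B))"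
    using LR by (auto simp: disjnt_def)
  ultimately have "partition_on S \<I>'"
    unfolding \<I>'_def using partition_on_insert J(2) False by blast
  then have "interval_partition S \<I>'"
    using fin int J(1) is_interval_left_of is_interval_right_of
    unfolding interval_partition_def \<I>'_def A_def B_def L_def R_def
    by (auto intro: is_interval_Int)
  moreover have "card \<I>' \<le> card \<I> + 2"
  proof -
    have J_sub: "J \<subseteq> I" if "I \<in> A \<inter> B" for I
      using that int interval_meeting_left_of_and_right_of unfolding A_def B_def L_def R_def by blast
    have "I1 = I2" if "I1 \<in> A \<inter> B" "I2 \<in> A \<inter> B" for I1 I2
    proof (rule ccontr)
      assume "I1 \<noteq> I2"
      then have "I1 \<inter> I2 = {}"
        using disjointD[OF partition_onD2[OF part_on]] that by (auto simp: A_def)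
      then show False
        using J_sub[OF that(1)] J_sub[OF that(2)] False by blast
    qed
    then have "card (A \<inter> B) \<le> 1"
      using fin card_le_Suc0_iff_eq[of "A \<inter> B"] by (simp add: A_def)
    then have "card ((\<inter>) L ` A \<union> (\<inter>) R ` B) \<le> card \<I> + 1"
      using fin by (intro card_image_Un_image_le) (auto simp: A_def B_def)
    then show ?thesis
      unfolding \<I>'_def using fin by (simp add: card_insert_if A_def B_def)
  qed
  moreover have "I' = J \<or> (\<exists>I\<in>\<I>. I' \<subseteq> I \<and> disjnt I' J)" if "I' \<in> \<I>'" for I'
    using that LR unfolding \<I>'_def A_def B_def disjnt_def by blast
  ultimately show ?thesis using that by blast
qed

definition attains_lower_envelope ::
    "(nat \<Rightarrow> real set) \<Rightarrow> (nat \<Rightarrow> real \<Rightarrow> real) \<Rightarrow> nat set \<Rightarrow> nat \<Rightarrow> real set \<Rightarrow> bool" where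
  "attains_lower_envelope D Q T \<tau> I \<longleftrightarrow>
     \<tau> \<in> T \<and> I \<subseteq> D \<tau> \<and> (\<forall>x\<in>I. \<forall>t\<in>T. x \<in> D t \<longrightarrow> Q \<tau> x \<le> Q t x)"

lemma attains_lower_envelope_insert_index:
  assumes env: "attains_lower_envelope D Q {Suc m..s} \<tau> I" and "I' \<subseteq> I"
    and D_mono: "\<And>t t'. t \<le> t' \<Longrightarrow> D t \<subseteq> D t'"
    and beaten: "\<And>x. x \<in> I' \<Longrightarrow> x \<in> D m \<Longrightarrow> \<exists>t\<in>{Suc m..s}. Q t x \<le> Q m x"
  shows "attains_lower_envelope D Q {m..s} \<tau> I'"
proof -
  have best: "Q \<tau> x \<le> Q t x" if "x \<in> I'" "t \<in> {Suc m..s}" "x \<in> D t" for x t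
    using env \<open>I' \<subseteq> I\<close> that unfolding attains_lower_envelope_def by blast
  have beaten_m: "Q \<tau> x \<le> Q m x" if x: "x \<in> I'" "x \<in> D m" for x
  proof -
    obtain t where t: "t \<in> {Suc m..s}" "Q t x \<le> Q m x"
      using beaten[OF x] by blast
    moreover have "x \<in> D t"
      using D_mono[of m t] t x by auto
    ultimately show ?thesis
      using best[OF \<open>x \<in> I'\<close>] by force
  qed
  have "Q \<tau> x \<le> Q t x" if "x \<in> I'" "t \<in> {m..s}" "x \<in> D t" for x t
  proof (cases "t = m")
    case True
    then show ?thesis using beaten_m that by blast
  next
    case False
    then show ?thesis using best that by simp
  qed
  then show ?thesis
    using env \<open>I' \<subseteq> I\<close> unfolding attains_lower_envelope_def by auto
qed

lemma lower_envelope_interval_partition: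
  fixes D :: "nat \<Rightarrow> real set" and Q :: "nat \<Rightarrow> real \<Rightarrow> real"
  assumes "m \<le> s"
    and D_interval: "\<And>t. is_interval (D t)"
    and D_mono: "\<And>t t'. t \<le> t' \<Longrightarrow> D t \<subseteq> D t'"
    and Q_less_interval: "\<And>t t'. t < t' \<Longrightarrow> is_interval {x. Q t x < Q t' x}"
  shows "\<exists>\<I>. interval_partition (D s) \<I> \<and> card \<I> \<le> 2 * (s - m) + 1 \<and>
    (\<forall>I\<in>\<I>. \<exists>\<tau>. attains_lower_envelope D Q {m..s} \<tau> I)"
  using assms(1)
proof (induction m rule: inc_induct)
  case base
  have "interval_partition (D s) ({D s} - {{}})"
    using D_interval by (auto simp: interval_partition_def partition_on_def pairwise_def)
  moreover have "card ({D s} - {{}}) \<le> 1"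
    using card_Diff1_le[of "{D s}" "{}"] by simp
  moreover have "attains_lower_envelope D Q {s..s} s (D s)"
    by (simp add: attains_lower_envelope_def)
  ultimately show ?case by (intro exI[of _ "{D s} - {{}}"]) auto
next
  case (step m)
  then obtain \<I> where part: "interval_partition (D s) \<I>" and card: "card \<I> \<le> 2 * (s - Suc m) + 1"
    and env: "\<forall>I\<in>\<I>. \<exists>\<tau>. attains_lower_envelope D Q {Suc m..s} \<tau> I"
    by blast
  define J where "J = D m \<inter> (\<Inter>t\<in>{Suc m..s}. {x. Q m x < Q t x})"
  have "is_interval J"
    using D_interval Q_less_interval unfolding J_def is_interval_convex_1
    by (intro convex_Int convex_INT) auto
  moreover have "J \<subseteq> D s"
    using D_mono[of m s] step.hyps by (auto simp: J_def)
  ultimately obtain \<I>' where part': "interval_partition (D s) \<I>'" and card': "card \<I>' \<le> card \<I> + 2"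
    and new: "\<And>I'. I' \<in> \<I>' \<Longrightarrow> I' = J \<or> (\<exists>I\<in>\<I>. I' \<subseteq> I \<and> disjnt I' J)"
    using interval_partition_refine[OF part] by blast
  have "\<exists>\<tau>. attains_lower_envelope D Q {m..s} \<tau> I'" if "I' \<in> \<I>'" for I'
    using new[OF that]
  proof
    assume "I' = J"
    moreover have "Q m x \<le> Q t x" if "x \<in> J" "t \<in> {m..s}" for x t
      using that by (cases "t = m") (auto simp: J_def intro: less_imp_le)
    ultimately have "attains_lower_envelope D Q {m..s} m I'"
      using step.hyps by (auto simp: attains_lower_envelope_def J_def)
    then show ?thesis ..
  next
    assume "\<exists>I\<in>\<I>. I' \<subseteq> I \<and> disjnt I' J"
    then obtain I where I: "I \<in> \<I>" "I' \<subseteq> I" "disjnt I' J"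
      by blast
    then obtain \<tau> where "attains_lower_envelope D Q {Suc m..s} \<tau> I"
      using env by blast
    moreover have "\<exists>t\<in>{Suc m..s}. Q t x \<le> Q m x" if "x \<in> I'" "x \<in> D m" for x
    proof -
      have "x \<notin> J"
        using that(1) I(3) by (auto simp: disjnt_def)
      then show ?thesis
        using that(2) unfolding J_def by (auto simp: not_less)
    qed
    ultimately have "attains_lower_envelope D Q {m..s} \<tau> I'"
      using attains_lower_envelope_insert_index[where D = D, OF _ I(2) D_mono] by blast
    then show ?thesis ..
  qed
  then show ?case
    using part' card' card step.hyps by (intro exI[of _ \<I>']) auto
qed

definition quadratic_on :: "real set \<Rightarrow> (real \<Rightarrow> ereal) \<Rightarrow> bool" where
  "quadratic_on I f \<longleftrightarrow> (\<exists>a b c. \<forall>x\<in>I. f x = ereal (a * x^2 + b * x + c))"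

lemma lq_pieces_of_interval_partition:
  fixes f :: "real \<Rightarrow> ereal"
  assumes part: "interval_partition {x. f x \<noteq> \<infinity>} \<I>"
    and quad: "\<forall>I\<in>\<I>. quadratic_on I f"
  shows "lq_pieces f (card \<I>)"
proof -
  from bchoice[OF quad[unfolded quadratic_on_def]] obtain a
    where "\<forall>I\<in>\<I>. \<exists>b c. \<forall>x\<in>I. f x = ereal (a I * x^2 + b * x + c)" ..
  from bchoice[OF this] obtain b
    where "\<forall>I\<in>\<I>. \<exists>c. \<forall>x\<in>I. f x = ereal (a I * x^2 + b I * x + c)" ..
  from bchoice[OF this] obtain c
    where abc: "\<forall>I\<in>\<I>. \<forall>x\<in>I. f x = ereal (a I * x^2 + b I * x + c I)" ..
  obtain h where h: "bij_betw h {..<card \<I>} \<I>"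
    using ex_bij_betw_nat_finite[of \<I>] part by (auto simp: interval_partition_def atLeast0LessThan)
  then have "h i \<in> \<I>" if "i < card \<I>" for i
    using that by (auto simp: bij_betw_def)
  moreover have "(\<Union>i<card \<I>. h i) = {x. f x \<noteq> \<infinity>}"
    using bij_betw_imp_surj_on[OF h] part by (simp add: interval_partition_def partition_on_def)
  ultimately show ?thesis
    unfolding lq_pieces_def using part abc
    by (intro exI[of _ h] exI[of _ "a \<circ> h"] exI[of _ "b \<circ> h"] exI[of _ "c \<circ> h"])
      (auto simp: interval_partition_def)
qed

lemma sum_shifted_squares:
  fixes x c :: real and z :: "nat \<Rightarrow> real"
  shows "(\<Sum>j\<in>S. (x - z j)^2 / 2 + c) =
    real (card S) / 2 * x^2 + (- (\<Sum>j\<in>S. z j)) * x + (\<Sum>j\<in>S. (z j)^2 / 2 + c)"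
proof -
  have "(x - z j)^2 / 2 + c = x^2 / 2 + (- z j) * x + ((z j)^2 / 2 + c)" for j
    by (simp add: power2_diff diff_divide_distrib add_divide_distrib)
  then have "(\<Sum>j\<in>S. (x - z j)^2 / 2 + c) =
      (\<Sum>j\<in>S. x^2 / 2) + (\<Sum>j\<in>S. (- z j) * x) + (\<Sum>j\<in>S. (z j)^2 / 2 + c)"
    by (simp only: sum.distrib)
  then show ?thesis
    by (simp only: sum_constant sum_negf sum_distrib_right[symmetric])
qed

lemma ereal_min_add_distrib: "min (x::ereal) y + c = min (x + c) (y + c)"
  by (metis add_right_mono antisym le_cases min.absorb1 min.absorb2)

locale l0_fusion_dp =
  fixes lam1 lam2 :: real and z l u :: "nat \<Rightarrow> real" and n :: nat
  assumes lam1_nonneg: "0 \<le> lam1" and lam2_nonneg: "0 \<le> lam2"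
    and boxes_contain_0: "\<And>i. i \<in> {1..n} \<Longrightarrow> l i \<le> 0 \<and> 0 \<le> u i"
begin

abbreviation P :: "nat \<Rightarrow> real \<Rightarrow> ereal" where
  "P \<equiv> Pstar lam1 lam2 z l u"

definition coord_cost :: "nat \<Rightarrow> real \<Rightarrow> ereal" where
  "coord_cost j a = ereal ((a - z j)^2 / 2) + omega lam2 l u j a"

definition prefix_cost :: "nat \<Rightarrow> ereal" where
  "prefix_cost k = (if k = 0 then 0 else (INF b. P k b) + ereal lam1)"

text \<open>The cost of ending in value a at index s when the last jump is between k and k + 1
  (k = 0: no jump at all).\<close>
definition split_cost :: "nat \<Rightarrow> nat \<Rightarrow> real \<Rightarrow> ereal" where
  "split_cost k s a = prefix_cost k + (\<Sum>j\<in>{k<..s}. coord_cost j a)"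

lemma coord_cost_in_box: "x \<in> {l j..u j} \<Longrightarrow> coord_cost j x = ereal ((x - z j)^2 / 2 + lam2 * l0norm x)"
  by (simp add: coord_cost_def omega_def)

lemma coord_cost_outside_box: "x \<notin> {l j..u j} \<Longrightarrow> coord_cost j x = \<infinity>"
  by (simp add: coord_cost_def omega_def)

lemma split_cost_Suc: "k \<le> s \<Longrightarrow> split_cost k (Suc s) a = split_cost k s a + coord_cost (Suc s) a"
  by (simp add: split_cost_def add.assoc atLeastSucAtMost_greaterThanAtMost[symmetric])

lemma Pstar_eq_Min_split_cost:
  assumes "1 \<le> s"
  shows "P s a = (MIN k\<in>{..<s}. split_cost k s a)"
  using assms
proof (induction s rule: nat_induct_at_least)
  case base
  show ?case
    by (simp add: split_cost_def prefix_cost_def coord_cost_def power2_commute lessThan_Suc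
        atLeastSucAtMost_greaterThanAtMost[symmetric])
next
  case (Suc s)
  then obtain k where s: "s = Suc k" by (cases s) auto
  have "P (Suc s) a = min (P s a) (prefix_cost s) + coord_cost (Suc s) a"
    using s by (simp add: prefix_cost_def coord_cost_def add.assoc)
  also have "\<dots> = min (MIN k\<in>{..<s}. split_cost k s a) (split_cost s s a) + coord_cost (Suc s) a"
    using Suc.IH by (simp add: split_cost_def)
  also have "\<dots> = (MIN k\<in>{..<Suc s}. split_cost k s a) + coord_cost (Suc s) a"
    using s by (simp add: lessThan_Suc min.commute Min_insert)
  also have "\<dots> = (MIN k\<in>{..<Suc s}. split_cost k s a + coord_cost (Suc s) a)"
    using hom_Min_commute[of "\<lambda>y. y + coord_cost (Suc s) a" "(\<lambda>k. split_cost k s a) ` {..<Suc s}",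
        OF ereal_min_add_distrib]
    by (simp add: image_image lessThan_empty_iff)
  also have "\<dots> = (MIN k\<in>{..<Suc s}. split_cost k (Suc s) a)"
    by (simp add: split_cost_Suc)
  finally show ?case .
qed

lemma Pstar_nonneg: "0 \<le> P s a"
proof (induction s arbitrary: a)
  case (Suc s)
  have "0 \<le> omega lam2 l u j b" for j b
    using lam2_nonneg by (simp add: omega_def l0norm_def)
  moreover have "0 \<le> (INF b. P s b)"
    using Suc.IH by (simp add: le_INF_iff)
  ultimately show ?case
    using Suc.IH lam1_nonneg by (cases s) auto
qed simp

lemma prefix_cost_finite:
  assumes "k \<le> n"
  shows "\<bar>prefix_cost k\<bar> \<noteq> \<infinity>"
proof (cases "k = 0")
  case False
  have "coord_cost j 0 \<noteq> \<infinity>" if "j \<in> {0<..k}" for j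
    using boxes_contain_0[of j] that assms by (simp add: coord_cost_in_box l0norm_def)
  then have "split_cost 0 k 0 \<noteq> \<infinity>"
    by (simp add: split_cost_def prefix_cost_def sum_Pinfty)
  moreover have "P k 0 \<le> split_cost 0 k 0"
    using False Pstar_eq_Min_split_cost[of k 0] by simp
  ultimately have "(INF b. P k b) \<noteq> \<infinity>"
    by (metis INF_lower UNIV_I order_trans ereal_infty_less_eq(1))
  moreover have "0 \<le> (INF b. P k b)"
    using Pstar_nonneg by (simp add: le_INF_iff)
  ultimately show ?thesis
    using False by (cases "INF b. P k b") (auto simp: prefix_cost_def)
qed (simp add: prefix_cost_def)

lemma split_cost_in_boxes:
  assumes "k \<le> n" "\<forall>j\<in>{k<..s}. x \<in> {l j..u j}"
  shows "split_cost k s x =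
    ereal (real_of_ereal (prefix_cost k) + (\<Sum>j\<in>{k<..s}. (x - z j)^2 / 2 + lam2 * l0norm x))"
proof -
  have "(\<Sum>j\<in>{k<..s}. coord_cost j x) = (\<Sum>j\<in>{k<..s}. ereal ((x - z j)^2 / 2 + lam2 * l0norm x))"
    using assms(2) by (intro sum.cong) (auto simp: coord_cost_in_box)
  moreover obtain r where "prefix_cost k = ereal r"
    using prefix_cost_finite[OF assms(1)] by (cases "prefix_cost k") auto
  ultimately show ?thesis
    by (simp add: split_cost_def)
qed

lemma split_cost_outside_box:
  assumes "j \<in> {k<..s}" "x \<notin> {l j..u j}"
  shows "split_cost k s x = \<infinity>"
proof -
  have "coord_cost j x = \<infinity>"
    using assms(2) by (rule coord_cost_outside_box)
  then have "(\<Sum>i\<in>{k<..s}. coord_cost i x) = \<infinity>"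
    unfolding sum_Pinfty using assms(1) by blast
  then show ?thesis
    by (simp add: split_cost_def)
qed

lemma Pstar_domain:
  assumes "1 \<le> s" "s \<le> n"
  shows "{x. P s x \<noteq> \<infinity>} = {l s..u s}"
proof -
  have "P s x = \<infinity>" if "x \<notin> {l s..u s}" for x
  proof -
    have "(\<lambda>k. split_cost k s x) ` {..<s} = {\<infinity>}"
      using that assms(1) split_cost_outside_box[of s] by force
    then show ?thesis
      using Pstar_eq_Min_split_cost[OF assms(1)] by simp
  qed
  moreover have "P s x \<noteq> \<infinity>" if "x \<in> {l s..u s}" for x
  proof -
    have "{s - 1<..s} = {s}"
      using assms(1) by auto
    then have "split_cost (s - 1) s x \<noteq> \<infinity>"
      using split_cost_in_boxes[of "s - 1" s x] assms that by simp
    moreover have "P s x \<le> split_cost (s - 1) s x"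
      using Pstar_eq_Min_split_cost[OF assms(1)] assms(1) by simp
    ultimately show ?thesis
      by (metis ereal_infty_less_eq(1))
  qed
  ultimately show ?thesis by blast
qed

definition candidate_domain :: "real set \<Rightarrow> nat \<Rightarrow> nat \<Rightarrow> real set" where
  "candidate_domain R s k = R \<inter> (\<Inter>j\<in>{k<..s}. {l j..u j})"

definition candidate :: "real \<Rightarrow> nat \<Rightarrow> nat \<Rightarrow> real \<Rightarrow> real" where
  "candidate \<sigma> s k x = real_of_ereal (prefix_cost k) + (\<Sum>j\<in>{k<..s}. (x - z j)^2 / 2 + lam2 * \<sigma>)"

lemma candidate_quadratic:
  "candidate \<sigma> s k x = real (s - k) / 2 * x^2 + (- (\<Sum>j\<in>{k<..s}. z j)) * x
    + (real_of_ereal (prefix_cost k) + (\<Sum>j\<in>{k<..s}. (z j)^2 / 2 + lam2 * \<sigma>))"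
  unfolding candidate_def sum_shifted_squares by simp

lemma split_cost_eq_candidate:
  assumes "k < s" "s \<le> n" "\<forall>x\<in>R. l0norm x = \<sigma>" "x \<in> candidate_domain R s k"
  shows "split_cost k s x = ereal (candidate \<sigma> s k x)"
  using assms split_cost_in_boxes[of k s x] by (simp add: candidate_domain_def candidate_def)

lemma Pstar_eq_candidate:
  assumes s: "1 \<le> s" "s \<le> n" and R: "\<forall>x\<in>R. l0norm x = \<sigma>"
    and env: "attains_lower_envelope (candidate_domain R s) (candidate \<sigma> s) {0..s - 1} \<tau> I"
    and "x \<in> I"
  shows "P s x = ereal (candidate \<sigma> s \<tau> x)"
proof (rule antisym)
  have \<tau>: "\<tau> < s" and I: "x \<in> candidate_domain R s \<tau>"
    using env \<open>x \<in> I\<close> s(1) by (auto simp: attains_lower_envelope_def)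
  have "P s x \<le> split_cost \<tau> s x"
    using Pstar_eq_Min_split_cost[OF s(1)] \<tau> by simp
  also have "\<dots> = ereal (candidate \<sigma> s \<tau> x)"
    using split_cost_eq_candidate \<tau> s(2) R I by blast
  finally show "P s x \<le> ereal (candidate \<sigma> s \<tau> x)" .
  have "ereal (candidate \<sigma> s \<tau> x) \<le> split_cost k s x" if "k < s" for k
  proof (cases "x \<in> candidate_domain R s k")
    case True
    then show ?thesis
      using env \<open>x \<in> I\<close> that split_cost_eq_candidate[OF that s(2) R True]
      by (auto simp: attains_lower_envelope_def)
  next
    case False
    then obtain j where "j \<in> {k<..s}" "x \<notin> {l j..u j}"
      using I by (auto simp: candidate_domain_def)
    then show ?thesis
      by (simp add: split_cost_outside_box)
  qed
  then show "ereal (candidate \<sigma> s \<tau> x) \<le> P s x"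
    using Pstar_eq_Min_split_cost[OF s(1)] s(1) by (simp add: lessThan_empty_iff)
qed

lemma Pstar_interval_partition_on_sign_region:
  assumes s: "1 \<le> s" "s \<le> n" and R: "is_interval R" "\<forall>x\<in>R. l0norm x = \<sigma>"
  shows "\<exists>\<I>. interval_partition ({l s..u s} \<inter> R) \<I> \<and> card \<I> \<le> 2 * s - 1 \<and>
    (\<forall>I\<in>\<I>. quadratic_on I (P s))"
proof -
  have "is_interval (candidate_domain R s k)" for k
    using R(1) unfolding candidate_domain_def is_interval_convex_1
    by (intro convex_Int convex_INT) auto
  moreover have "candidate_domain R s k \<subseteq> candidate_domain R s k'" if "k \<le> k'" for k k'
    using that by (auto simp: candidate_domain_def)
  moreover have "is_interval {x. candidate \<sigma> s k x < candidate \<sigma> s k' x}" if "k < k'" for k k'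
    unfolding candidate_quadratic using that
    by (intro is_interval_quadratic_less) (simp add: divide_right_mono)
  ultimately obtain \<I> where part: "interval_partition (candidate_domain R s (s - 1)) \<I>"
    and card: "card \<I> \<le> 2 * (s - 1) + 1"
    and env: "\<forall>I\<in>\<I>. \<exists>\<tau>. attains_lower_envelope (candidate_domain R s) (candidate \<sigma> s) {0..s - 1} \<tau> I"
    using lower_envelope_interval_partition[of 0 "s - 1" "candidate_domain R s" "candidate \<sigma> s"]
    by auto
  have "{s - 1<..s} = {s}"
    using s(1) by auto
  then have "candidate_domain R s (s - 1) = {l s..u s} \<inter> R"
    by (auto simp: candidate_domain_def)
  moreover have "quadratic_on I (P s)" if "I \<in> \<I>" for I
  proof -
    from bspec[OF env that] obtain \<tau>
      where "attains_lower_envelope (candidate_domain R s) (candidate \<sigma> s) {0..s - 1} \<tau> I" ..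
    then have "\<forall>x\<in>I. P s x = ereal (candidate \<sigma> s \<tau> x)"
      using Pstar_eq_candidate[OF s R(2)] by blast
    then show ?thesis
      unfolding quadratic_on_def candidate_quadratic by blast
  qed
  ultimately show ?thesis
    using part card s(1) by (intro exI[of _ \<I>]) auto
qed

lemma Pstar_lq_pieces:
  assumes "1 \<le> s" "s \<le> n"
  shows "\<exists>k. lq_pieces (P s) k \<and> k \<le> 6 * s"
proof -
  have "is_interval {x::real. x < 0}" "is_interval {0::real}" "is_interval {x::real. 0 < x}"
    unfolding is_interval_1 by auto
  note region = Pstar_interval_partition_on_sign_region[OF assms]
  obtain \<I>1 where \<I>1: "interval_partition ({l s..u s} \<inter> {x. x < 0}) \<I>1" "card \<I>1 \<le> 2 * s - 1"
    "\<forall>I\<in>\<I>1. quadratic_on I (P s)"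
    using region[OF \<open>is_interval {x. x < 0}\<close>, of 1] by (auto simp: l0norm_def)
  obtain \<I>2 where \<I>2: "interval_partition ({l s..u s} \<inter> {0}) \<I>2" "card \<I>2 \<le> 2 * s - 1"
    "\<forall>I\<in>\<I>2. quadratic_on I (P s)"
    using region[OF \<open>is_interval {0}\<close>, of 0] by (auto simp: l0norm_def)
  obtain \<I>3 where \<I>3: "interval_partition ({l s..u s} \<inter> {x. 0 < x}) \<I>3" "card \<I>3 \<le> 2 * s - 1"
    "\<forall>I\<in>\<I>3. quadratic_on I (P s)"
    using region[OF \<open>is_interval {x. 0 < x}\<close>, of 1] by (auto simp: l0norm_def)
  have "interval_partition ({l s..u s} \<inter> {x. x < 0} \<union> {l s..u s} \<inter> {0}) (\<I>1 \<union> \<I>2)"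
    by (rule interval_partition_Un[OF \<I>1(1) \<I>2(1)]) auto
  then have "interval_partition ({l s..u s} \<inter> {x. x < 0} \<union> {l s..u s} \<inter> {0}
      \<union> {l s..u s} \<inter> {x. 0 < x}) (\<I>1 \<union> \<I>2 \<union> \<I>3)"
    by (rule interval_partition_Un[OF _ \<I>3(1)]) auto
  moreover have "{l s..u s} \<inter> {x. x < 0} \<union> {l s..u s} \<inter> {0} \<union> {l s..u s} \<inter> {x. 0 < x} = {l s..u s}"
    by auto
  ultimately have "interval_partition {x. P s x \<noteq> \<infinity>} (\<I>1 \<union> \<I>2 \<union> \<I>3)"
    by (simp add: Pstar_domain[OF assms])
  moreover have "card (\<I>1 \<union> \<I>2 \<union> \<I>3) \<le> 6 * s"
    using \<I>1(2) \<I>2(2) \<I>3(2) card_Un_le[of "\<I>1 \<union> \<I>2" \<I>3] card_Un_le[of \<I>1 \<I>2] by linarith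
  moreover have "\<forall>I\<in>\<I>1 \<union> \<I>2 \<union> \<I>3. quadratic_on I (P s)"
    using \<I>1(3) \<I>2(3) \<I>3(3) by blast
  ultimately show ?thesis
    using lq_pieces_of_interval_partition by blast
qed

end

theorem lemma3p5:
  "\<forall>\<epsilon>>0. \<exists>C::real. \<forall>(n::nat) (z::nat \<Rightarrow> real) (l::nat \<Rightarrow> real) (u::nat \<Rightarrow> real)
      (lam1::real) (lam2::real) (s::nat).
      lam1 > 0 \<longrightarrow> lam2 > 0 \<longrightarrow> (\<forall>i\<in>{1..n}. l i \<le> 0 \<and> 0 \<le> u i) \<longrightarrow>
      2 \<le> s \<longrightarrow> s \<le> n \<longrightarrow>
      (\<exists>k::nat. lq_pieces (Pstar lam1 lam2 z l u s) k \<and> real k \<le> C * real s powr (1 + \<epsilon>))"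
proof (intro allI impI exI[of _ "6::real"])
  fix \<epsilon> lam1 lam2 :: real and n s :: nat and z l u :: "nat \<Rightarrow> real"
  assume "\<epsilon> > 0" "lam1 > 0" "lam2 > 0" and boxes: "\<forall>i\<in>{1..n}. l i \<le> 0 \<and> 0 \<le> u i"
    and s: "2 \<le> s" "s \<le> n"
  interpret l0_fusion_dp lam1 lam2 z l u n
    using \<open>lam1 > 0\<close> \<open>lam2 > 0\<close> boxes by unfold_locales auto
  obtain k where k: "lq_pieces (Pstar lam1 lam2 z l u s) k" "k \<le> 6 * s"
    using Pstar_lq_pieces[of s] s by force
  have "real s powr 1 \<le> real s powr (1 + \<epsilon>)"
    using \<open>\<epsilon> > 0\<close> s by (intro powr_mono) auto
  with k(2) have "real k \<le> 6 * real s powr (1 + \<epsilon>)"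
    using s by simp
  with k(1) show "\<exists>k. lq_pieces (Pstar lam1 lam2 z l u s) k \<and> real k \<le> 6 * real s powr (1 + \<epsilon>)"
    by blast
qed

end
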